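(* Fix integers $q\ge 1$ and $k\ge 5$, and let $G(q,k)$ be the graph on vertex set $\{v_0,v_1,\ldots,v_{kq}\}$ in which, with all indices taken modulo $kq+1$, the neighbourhood of $v_i$ is $$\{v_{i-1},v_{i+1}\}\cup\{v_{i+kj+m} : m=2,3,\ldots,k-1,\ j=0,1,\ldots,q-1\}.$$ Then $G(q,k)$ is $C_5$-free.
   Context: $C_5$ is the cycle on five vertices. A graph is $H$-free if it contains no induced subgraph isomorphic to $H$. *)

theory Defs
  imports Main
begin

definition has_induced_C5 :: "'a set \<Rightarrow> ('a \<Rightarrow> 'a \<Rightarrow> bool) \<Rightarrow> bool" where
  "has_induced_C5 V E \<longleftrightarrow>
     (\<exists>f :: nat \<Rightarrow> 'a. inj_on f {0..<5} \<and> f ` {0..<5} \<subseteq> V \<and>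
        (\<forall>i<5. \<forall>j<5. i \<noteq> j \<longrightarrow>
            (E (f i) (f j) \<longleftrightarrow> (j = (i + 1) mod 5 \<or> i = (j + 1) mod 5))))"

definition C5_free :: "'a set \<Rightarrow> ('a \<Rightarrow> 'a \<Rightarrow> bool) \<Rightarrow> bool" where
  "C5_free V E \<longleftrightarrow> \<not> has_induced_C5 V E"

text \<open>The graph G(q,k): vertex v_i is represented by the integer i, 0 \<le> i \<le> kq.\<close>
definition G_verts :: "int \<Rightarrow> int \<Rightarrow> int set" where
  "G_verts q k = {0 .. k * q}"

definition G_adj :: "int \<Rightarrow> int \<Rightarrow> int \<Rightarrow> int \<Rightarrow> bool" where
  "G_adj q k u v \<longleftrightarrow>
     (v = (u - 1) mod (k * q + 1) \<or> v = (u + 1) mod (k * q + 1) \<or>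
      (\<exists>m j. 2 \<le> m \<and> m \<le> k - 1 \<and> 0 \<le> j \<and> j \<le> q - 1 \<and>
             v = (u + k * j + m) mod (k * q + 1)))"

end

theory Submission
  imports Defs "HOL-Number_Theory.Cong"
begin

(* G(q,k) is a circulant graph on the integers modulo n = kq + 1, and its non-edges are
   exactly the differences k s (mod n) with 0 < |s| < q: these are the residues k j and
   k j + 1 = k (j - q) + n for 1 <= j < q.  The complement of an induced C5 is again a C5,
   so an induced C5 gives a closed walk y_0, ..., y_5 = y_0 of non-edges with
   y_(i+1) - y_i = k s_i (mod n) and 0 < |s_i| < q.  As k is invertible modulo n and
   |s_0 + ... + s_4| <= 5 (q - 1) < n, the s_i sum to 0.  But the chords
   y_(i+2) - y_i = k (s_i + s_(i+1)) are edges, which forces |s_i + s_(i+1)| >= q; hence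
   consecutive s_i have the same sign and cannot sum to 0. *)

lemma mod_ge_2_iff_ex_decomp:
  fixes k q r :: int
  assumes "k > 0" "0 \<le> r" "r \<le> k * q"
  shows "(\<exists>m j. 2 \<le> m \<and> m \<le> k - 1 \<and> 0 \<le> j \<and> j \<le> q - 1 \<and> r = k * j + m) \<longleftrightarrow>
    2 \<le> r mod k"
proof
  assume "\<exists>m j. 2 \<le> m \<and> m \<le> k - 1 \<and> 0 \<le> j \<and> j \<le> q - 1 \<and> r = k * j + m"
  then obtain m j where "2 \<le> m" "m \<le> k - 1" "r = k * j + m" by blast
  then show "2 \<le> r mod k" by simp
next
  assume rem: "2 \<le> r mod k"
  have r: "r = k * (r div k) + r mod k" by simp
  then have "k * (r div k) < k * q" using rem assms(3) by linarith
  then have "r div k \<le> q - 1" using assms(1) by simp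
  moreover have "0 \<le> r div k" using assms(1,2) by (simp add: pos_imp_zdiv_nonneg_iff)
  moreover have "r mod k \<le> k - 1" using assms(1) by simp
  ultimately show "\<exists>m j. 2 \<le> m \<and> m \<le> k - 1 \<and> 0 \<le> j \<and> j \<le> q - 1 \<and> r = k * j + m"
    using rem r by blast
qed

lemma G_adj_iff_residue:
  fixes q k u v :: int
  assumes "q \<ge> 1" "k \<ge> 1" "v \<in> G_verts q k"
  shows "G_adj q k u v \<longleftrightarrow>
    (v - u) mod (k * q + 1) \<in> {1, k * q} \<or> 2 \<le> (v - u) mod (k * q + 1) mod k"
proof -
  define n where "n = k * q + 1"
  have kq: "k * q \<ge> 1" using assms(1,2) mult_mono[of 1 k 1 q] by simp
  have "0 \<le> v" "v < n" using assms(3) unfolding G_verts_def n_def by auto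
  then have eq_mod_iff: "v = z mod n \<longleftrightarrow> (v - u) mod n = (z - u) mod n" for z
    by (metis cong_add_rcancel cong_def diff_add_cancel mod_pos_pos_trivial)
  have shift: "(k * j + m) mod n = k * j + m" if "2 \<le> m" "m \<le> k - 1" "0 \<le> j" "j \<le> q - 1" for j m
  proof -
    have "k * j \<le> k * (q - 1)" using that assms(2) by (intro mult_left_mono) auto
    then show ?thesis
      unfolding n_def using that assms(2) by (intro mod_pos_pos_trivial) (auto simp: algebra_simps)
  qed
  have "(\<exists>m j. 2 \<le> m \<and> m \<le> k - 1 \<and> 0 \<le> j \<and> j \<le> q - 1 \<and> v = (u + k * j + m) mod n) \<longleftrightarrow>
      (\<exists>m j. 2 \<le> m \<and> m \<le> k - 1 \<and> 0 \<le> j \<and> j \<le> q - 1 \<and> (v - u) mod n = k * j + m)"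
    unfolding eq_mod_iff by (simp add: add.assoc shift cong: conj_cong)
  also have "\<dots> \<longleftrightarrow> 2 \<le> (v - u) mod n mod k"
    using assms(2) pos_mod_bound[of n "v - u"] pos_mod_sign[of n "v - u"] kq unfolding n_def
    by (intro mod_ge_2_iff_ex_decomp) auto
  finally show ?thesis
    unfolding G_adj_def n_def[symmetric] eq_mod_iff using kq by (auto simp: n_def zmod_minus1)
qed

lemma ex_short_multiple_cong_iff:
  fixes q k r :: int
  assumes q: "q \<ge> 1" and k: "k \<ge> 2" and r: "0 < r" "r \<le> k * q"
  shows "(\<exists>s. s \<noteq> 0 \<and> \<bar>s\<bar> < q \<and> [r = k * s] (mod k * q + 1)) \<longleftrightarrow>
    r mod k < 2 \<and> r \<notin> {1, k * q}"
proof
  assume "\<exists>s. s \<noteq> 0 \<and> \<bar>s\<bar> < q \<and> [r = k * s] (mod k * q + 1)"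
  then obtain s where s: "s \<noteq> 0" "\<bar>s\<bar> < q" and rs: "[r = k * s] (mod k * q + 1)" by blast
  show "r mod k < 2 \<and> r \<notin> {1, k * q}"
  proof (cases "s > 0")
    case True
    have "k * s \<le> k * (q - 1)" using s k by (intro mult_left_mono) auto
    moreover have "k * s > 0" using True k by simp
    ultimately have "r = k * s" using rs r k by (intro cong_less_imp_eq_int) (auto simp: algebra_simps)
    moreover have "k * s < k * q" using s k True by simp
    moreover have "k \<le> k * s" using True k by simp
    ultimately have "r mod k = 0" "1 < r" "r < k * q" using k by (simp_all, linarith)
    then show ?thesis by auto
  next
    case False
    note rs
    also have "[k * s = k * s + (k * q + 1)] (mod k * q + 1)" by (simp add: cong_def)
    also have "k * s + (k * q + 1) = k * (s + q) + 1" by (simp add: algebra_simps)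
    finally have rs': "[r = k * (s + q) + 1] (mod k * q + 1)" .
    have "k * (s + q) \<le> k * (q - 1)" using s False k by (intro mult_left_mono) auto
    moreover have "k \<le> k * (s + q)" using s False k by simp
    ultimately have "r = k * (s + q) + 1" using rs' r k by (intro cong_less_imp_eq_int) (auto simp: algebra_simps)
    then have "r mod k = 1" "r > k" using k \<open>k \<le> k * (s + q)\<close> by auto
    then show ?thesis using k by auto
  qed
next
  assume "r mod k < 2 \<and> r \<notin> {1, k * q}"
  moreover have "0 \<le> r mod k" using k by simp
  ultimately have m: "r mod k = 0 \<or> r mod k = 1" and "r \<noteq> 1" "r \<noteq> k * q" by auto
  define j where "j = r div k"
  have r_eq: "r = k * j + r mod k" unfolding j_def by simp
  have "k * j \<le> k * q" using r_eq r m by linarith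
  then have "j \<le> q" using k by simp
  have "0 \<le> j" unfolding j_def using r k by (simp add: pos_imp_zdiv_nonneg_iff)
  from m show "\<exists>s. s \<noteq> 0 \<and> \<bar>s\<bar> < q \<and> [r = k * s] (mod k * q + 1)"
  proof
    assume "r mod k = 0"
    then have "r = k * j" using r_eq by simp
    then have "0 < j" "j \<noteq> q" using r \<open>r \<noteq> k * q\<close> k by (auto simp: zero_less_mult_iff)
    then show ?thesis using \<open>r = k * j\<close> \<open>j \<le> q\<close> by (intro exI[of _ j]) auto
  next
    assume "r mod k = 1"
    then have "r = k * j + 1" using r_eq by simp
    then have "0 < j" "j \<noteq> q" using r \<open>r \<noteq> 1\<close> \<open>0 \<le> j\<close> by auto
    moreover have "r = k * (j - q) + (k * q + 1)" using \<open>r = k * j + 1\<close> by (simp add: algebra_simps)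
    then have "[r = k * (j - q)] (mod k * q + 1)" by (simp add: cong_def)
    ultimately show ?thesis using \<open>j \<le> q\<close> by (intro exI[of _ "j - q"]) auto
  qed
qed

lemma G_verts_cong_imp_eq:
  fixes q k x y :: int
  assumes "x \<in> G_verts q k" "y \<in> G_verts q k" "[x = y] (mod k * q + 1)"
  shows "x = y"
  using assms unfolding G_verts_def by (intro cong_less_imp_eq_int[of x "k * q + 1" y]) auto

lemma not_G_adj_iff_cong:
  fixes q k x y :: int
  assumes q: "q \<ge> 1" and k: "k \<ge> 2"
    and x: "x \<in> G_verts q k" and y: "y \<in> G_verts q k" and "x \<noteq> y"
  shows "\<not> G_adj q k x y \<longleftrightarrow> (\<exists>s. s \<noteq> 0 \<and> \<bar>s\<bar> < q \<and> [y - x = k * s] (mod k * q + 1))"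
proof -
  define r where "r = (y - x) mod (k * q + 1)"
  have kq: "k * q \<ge> 1" using q k mult_mono[of 1 k 1 q] by simp
  have "r \<noteq> 0"
  proof
    assume "r = 0"
    then have "[y = x] (mod k * q + 1)"
      unfolding r_def by (simp add: cong_iff_dvd_diff dvd_eq_mod_eq_0)
    then show False using G_verts_cong_imp_eq[OF y x] \<open>x \<noteq> y\<close> by simp
  qed
  moreover have "0 \<le> r" "r \<le> k * q" unfolding r_def using kq pos_mod_bound[of "k * q + 1" "y - x"] by auto
  ultimately have r: "0 < r" "r \<le> k * q" by auto
  have "G_adj q k x y \<longleftrightarrow> r \<in> {1, k * q} \<or> 2 \<le> r mod k"
    unfolding r_def using q k y by (intro G_adj_iff_residue) auto
  moreover have "[y - x = k * s] (mod k * q + 1) \<longleftrightarrow> [r = k * s] (mod k * q + 1)" for s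
    unfolding r_def by simp
  ultimately show ?thesis using ex_short_multiple_cong_iff[OF q k r] by auto
qed

lemma G_adj_imp_abs_multiplier_ge:
  fixes q k x y t :: int
  assumes q: "q \<ge> 1" and k: "k \<ge> 2"
    and x: "x \<in> G_verts q k" and y: "y \<in> G_verts q k" and "x \<noteq> y"
    and "G_adj q k x y" and diff: "[y - x = k * t] (mod k * q + 1)"
  shows "q \<le> \<bar>t\<bar>"
proof (rule ccontr)
  assume "\<not> q \<le> \<bar>t\<bar>"
  moreover have "t \<noteq> 0"
  proof
    assume "t = 0"
    then have "[y = x] (mod k * q + 1)" using diff by (simp add: cong_diff_iff_cong_0)
    then show False using G_verts_cong_imp_eq[OF y x] \<open>x \<noteq> y\<close> by simp
  qed
  ultimately have "\<exists>s. s \<noteq> 0 \<and> \<bar>s\<bar> < q \<and> [y - x = k * s] (mod k * q + 1)"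
    using diff by (intro exI[of _ t]) simp
  then show False using not_G_adj_iff_cong[OF q k x y \<open>x \<noteq> y\<close>] \<open>G_adj q k x y\<close> by blast
qed

lemma small_cong_mult_zero_imp_zero:
  fixes k q t :: int
  assumes "[k * t = 0] (mod k * q + 1)" and "\<bar>t\<bar> \<le> k * q"
  shows "t = 0"
proof -
  have "coprime k (k * q + 1)" by (metis coprime_add_one_right coprime_mult_left_iff)
  then have "(k * q + 1) dvd t"
    using assms(1) cong_mult_lcancel[of k "k * q + 1" t 0] by (simp add: cong_0_iff)
  show ?thesis
  proof (rule ccontr)
    assume "t \<noteq> 0"
    with \<open>(k * q + 1) dvd t\<close> have "\<bar>k * q + 1\<bar> \<le> \<bar>t\<bar>" by (rule dvd_imp_le_int[rotated])
    then show False using assms(2) abs_ge_self[of "k * q + 1"] by linarith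
  qed
qed

lemma closed_walk_steps_sum_eq_0:
  fixes a s :: "nat \<Rightarrow> int" and k q :: int
  assumes "a L = a 0" and "int L \<le> k" and "q \<ge> 1"
    and steps: "\<And>i. i < L \<Longrightarrow> \<bar>s i\<bar> < q \<and> [a (Suc i) - a i = k * s i] (mod k * q + 1)"
  shows "(\<Sum>i<L. s i) = 0"
proof (rule small_cong_mult_zero_imp_zero)
  have "[(\<Sum>i<L. a (Suc i) - a i) = (\<Sum>i<L. k * s i)] (mod k * q + 1)"
    using steps by (intro cong_sum) auto
  then show "[k * (\<Sum>i<L. s i) = 0] (mod k * q + 1)"
    using \<open>a L = a 0\<close> by (simp add: sum_lessThan_telescope sum_distrib_left cong_sym_eq)
  have "\<bar>\<Sum>i<L. s i\<bar> \<le> (\<Sum>i<L. \<bar>s i\<bar>)" by (rule sum_abs)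
  also have "\<dots> \<le> of_nat (card {..<L}) * (q - 1)" using steps by (intro sum_bounded_above) force
  also have "\<dots> \<le> k * (q - 1)" using assms(2,3) by (simp add: mult_right_mono)
  also have "\<dots> \<le> k * q" using assms(2) by (simp add: algebra_simps)
  finally show "\<bar>\<Sum>i<L. s i\<bar> \<le> k * q" .
qed

lemma sum_ne_0_if_consecutive_sums_large:
  fixes s :: "nat \<Rightarrow> int" and q :: int
  assumes "0 < L" and s: "\<And>i. i < L \<Longrightarrow> s i \<noteq> 0 \<and> \<bar>s i\<bar> < q"
    and large: "\<And>i. Suc i < L \<Longrightarrow> q \<le> \<bar>s i + s (Suc i)\<bar>"
  shows "(\<Sum>i<L. s i) \<noteq> 0"
proof -
  have step: "0 < a \<longleftrightarrow> 0 < b" if "\<bar>a\<bar> < q" "\<bar>b\<bar> < q" "q \<le> \<bar>a + b\<bar>" for a b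
    using that by (cases "0 < a"; cases "0 < b"; cases "0 \<le> a + b") auto
  have same_sign: "0 < s i \<longleftrightarrow> 0 < s 0" if "i < L" for i
    using that
  proof (induction i)
    case (Suc i)
    then show ?case using step[of "s i" "s (Suc i)"] s[of i] s[of "Suc i"] large[of i] by simp
  qed simp
  show ?thesis
  proof (cases "0 < s 0")
    case True
    then have "0 < s i" if "i < L" for i using same_sign[OF that] by simp
    then have "0 < (\<Sum>i<L. s i)" using \<open>0 < L\<close> by (intro sum_pos) auto
    then show ?thesis by simp
  next
    case False
    then have "s i < 0" if "i < L" for i using same_sign[OF that] s[OF that] by linarith
    then have "(\<Sum>i<L. s i) < (\<Sum>i<L. 0)" using \<open>0 < L\<close> by (intro sum_strict_mono) auto
    then show ?thesis by simp
  qed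
qed

lemma has_induced_C5_complement_cycle:
  assumes "has_induced_C5 V E"
  obtains a :: "nat \<Rightarrow> 'a" where "\<And>i. a (i + 5) = a i" "\<And>i. a i \<in> V"
    "\<And>i. i < 5 \<Longrightarrow> a (Suc i) \<noteq> a i \<and> \<not> E (a i) (a (Suc i))"
    "\<And>i. i < 5 \<Longrightarrow> a (i + 2) \<noteq> a i \<and> E (a i) (a (i + 2))"
proof -
  obtain f :: "nat \<Rightarrow> 'a" where inj: "inj_on f {0..<5}" and V: "f ` {0..<5} \<subseteq> V"
    and E: "\<forall>i<5. \<forall>j<5. i \<noteq> j \<longrightarrow> (E (f i) (f j) \<longleftrightarrow> (j = (i + 1) mod 5 \<or> i = (j + 1) mod 5))"
    using assms unfolding has_induced_C5_def by blast
  have adj: "E (f i) (f j) \<longleftrightarrow> (j = (i + 1) mod 5 \<or> i = (j + 1) mod 5)"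
    if "i < 5" "j < 5" "i \<noteq> j" for i j
    using E that by blast
  have dist: "f i = f j \<longleftrightarrow> i = j" if "i < 5" "j < 5" for i j
    using inj_on_eq_iff[OF inj] that by simp
  have five: "(\<forall>i<5. P i) \<longleftrightarrow> P 0 \<and> P 1 \<and> P 2 \<and> P 3 \<and> P 4" for P :: "nat \<Rightarrow> bool"
    by (auto simp: less_Suc_eq numeral_eq_Suc)
  define a where "a i = f (2 * i mod 5)" for i
  have "\<forall>i<5. a (Suc i) \<noteq> a i \<and> \<not> E (a i) (a (Suc i))"
    unfolding five a_def by (simp add: adj dist)
  moreover have "\<forall>i<5. a (i + 2) \<noteq> a i \<and> E (a i) (a (i + 2))"
    unfolding five a_def by (simp add: adj dist)
  moreover have "a (i + 5) = a i" for i
    unfolding a_def by (rule arg_cong[of _ _ f]) presburger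
  moreover have "a i \<in> V" for i
    unfolding a_def using V by auto
  ultimately show ?thesis using that[of a] by blast
qed

theorem lemma2p5:
  fixes q k :: int
  assumes "q \<ge> 1" and "k \<ge> 5"
  shows "C5_free (G_verts q k) (G_adj q k)"
  unfolding C5_free_def
proof
  assume "has_induced_C5 (G_verts q k) (G_adj q k)"
  then obtain a :: "nat \<Rightarrow> int" where period: "\<And>i. a (i + 5) = a i"
    and verts: "\<And>i. a i \<in> G_verts q k"
    and non_adj: "\<And>i. i < 5 \<Longrightarrow> a (Suc i) \<noteq> a i \<and> \<not> G_adj q k (a i) (a (Suc i))"
    and adj: "\<And>i. i < 5 \<Longrightarrow> a (i + 2) \<noteq> a i \<and> G_adj q k (a i) (a (i + 2))"
    using has_induced_C5_complement_cycle by blast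
  have k: "k \<ge> 2" using assms(2) by simp
  have "\<exists>t. t \<noteq> 0 \<and> \<bar>t\<bar> < q \<and> [a (Suc i) - a i = k * t] (mod k * q + 1)" if "i < 5" for i
    using non_adj[OF that] not_G_adj_iff_cong[OF assms(1) k verts[of i] verts[of "Suc i"]] by auto
  then obtain s where s: "\<And>i. i < 5 \<Longrightarrow> s i \<noteq> 0 \<and> \<bar>s i\<bar> < q"
    and step: "\<And>i. i < 5 \<Longrightarrow> [a (Suc i) - a i = k * s i] (mod k * q + 1)"
    by metis
  have "(\<Sum>i<5. s i) = 0"
    by (rule closed_walk_steps_sum_eq_0[where a = a]) (use period[of 0] assms s step in auto)
  moreover have "(\<Sum>i<5. s i) \<noteq> 0"
  proof (rule sum_ne_0_if_consecutive_sums_large)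
    fix i assume "Suc i < 5"
    have "[a (i + 2) - a i = k * (s i + s (Suc i))] (mod k * q + 1)"
      using cong_add[OF step[of "Suc i"] step[of i]] \<open>Suc i < 5\<close> by (simp add: algebra_simps)
    then show "q \<le> \<bar>s i + s (Suc i)\<bar>"
      using G_adj_imp_abs_multiplier_ge[OF assms(1) k verts[of i] verts[of "i + 2"]] adj[of i] \<open>Suc i < 5\<close>
      by auto
  qed (use s in auto)
  ultimately show False by simp
qed

end
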